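(* Let $T$ be a tournament of odd order $n\ge 5$ and let $c_5(T)$ be the number of directed cycles of length $5$ in $T$. Then $$c_5(T)\le \frac{(n+1)n(n-1)(n-2)(n-3)}{160},$$ with equality if and only if $T$ is doubly regular.
   Context: A tournament is an orientation of a complete graph. A tournament of order $n$ is doubly regular if it is regular (every out-degree equals $\frac{n-1}{2}$) and the out-set of every vertex induces a regular subtournament; equivalently, every two distinct vertices have exactly $\frac{n-3}{4}$ common out-neighbours (this forces $n\equiv 3\pmod 4$). *)

theory Defs
  imports Complex_Main
begin

definition tournament :: "'a set \<Rightarrow> ('a \<Rightarrow> 'a \<Rightarrow> bool) \<Rightarrow> bool" where
  "tournament V E \<longleftrightarrow> finite V \<and>
     (\<forall>x y. E x y \<longrightarrow> x \<in> V \<and> y \<in> V \<and> x \<noteq> y) \<and>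
     (\<forall>x\<in>V. \<forall>y\<in>V. x \<noteq> y \<longrightarrow> (E x y \<longleftrightarrow> \<not> E y x))"

definition out_nbrs :: "'a set \<Rightarrow> ('a \<Rightarrow> 'a \<Rightarrow> bool) \<Rightarrow> 'a \<Rightarrow> 'a set" where
  "out_nbrs S E u = {w \<in> S. E u w}"

definition regular_on :: "'a set \<Rightarrow> ('a \<Rightarrow> 'a \<Rightarrow> bool) \<Rightarrow> bool" where
  "regular_on S E \<longleftrightarrow> (\<forall>u\<in>S. 2 * card (out_nbrs S E u) + 1 = card S)"

definition doubly_regular :: "'a set \<Rightarrow> ('a \<Rightarrow> 'a \<Rightarrow> bool) \<Rightarrow> bool" where
  "doubly_regular V E \<longleftrightarrow> regular_on V E \<and> (\<forall>v\<in>V. regular_on (out_nbrs V E v) E)"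

definition cyc_arcs :: "'a list \<Rightarrow> ('a \<times> 'a) set" where
  "cyc_arcs xs = set (zip xs (rotate1 xs))"

text \<open>Directed cycles of length 5, each identified with its set of arcs.\<close>
definition cycles5 :: "'a set \<Rightarrow> ('a \<Rightarrow> 'a \<Rightarrow> bool) \<Rightarrow> ('a \<times> 'a) set set" where
  "cycles5 V E = {cyc_arcs xs | xs. length xs = 5 \<and> distinct xs \<and> set xs \<subseteq> V \<and>
                    (\<forall>(a, b) \<in> cyc_arcs xs. E a b)}"

definition c5 :: "'a set \<Rightarrow> ('a \<Rightarrow> 'a \<Rightarrow> bool) \<Rightarrow> nat" where
  "c5 V E = card (cycles5 V E)"

end

theory Submission
  imports Defs
begin

text \<open>
  The number of directed 5-cycles is \<open>tr(A\<^sup>5)/5\<close> for the 0/1 adjacency matrix \<open>A\<close>.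
  Write \<open>2A = (J - I) + S\<close> with \<open>S = A - A\<^sup>T\<close> skew-symmetric, let \<open>s = S1\<close> be the vector of
  score excesses (out-degree minus in-degree) and \<open>X = S\<^sup>2 + nI - J\<close>. Then \<open>4A\<^sup>2 = B + K\<close> with
  \<open>B = (n - 1)(J - I) + X\<close> symmetric and \<open>K = s1\<^sup>T - 1s\<^sup>T - 2S\<close> skew-symmetric, and expanding
  \<open>tr(A\<^sup>5) = tr(A (A\<^sup>2)\<^sup>2)\<close> yields
  \<open>160 c\<^sub>5 = (n + 1)n(n - 1)(n - 2)(n - 3) - 5D\<close> where \<open>D = |X|\<^sup>2 - |X1|\<^sup>2 + (n - 2)\<^sup>2|s|\<^sup>2\<close>.

  Since \<open>X1 = Ss\<close> is orthogonal to \<open>s\<close>, a Cauchy-Schwarz argument gives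
  \<open>2|X1|\<^sup>2 \<le> n(n - 1)|s|\<^sup>2\<close>. For odd \<open>n\<close> the off-diagonal entries of \<open>S\<^sup>2\<close> are sums of \<open>n - 2\<close>
  signs, hence odd, so all entries of \<open>X\<close> are even; as they sum to \<open>-|s|\<^sup>2\<close>, this gives
  \<open>|X|\<^sup>2 \<ge> 2|s|\<^sup>2\<close>. Hence \<open>2D \<ge> 2(|X|\<^sup>2 - 2|s|\<^sup>2) + (n - 3)(n - 4)|s|\<^sup>2 \<ge> 0\<close>, and \<open>D = 0\<close> forces
  \<open>s = 0\<close> and \<open>X = 0\<close>: the tournament is regular and any two vertices have \<open>(n - 3)/4\<close> common
  out-neighbours, which is double regularity.
\<close>

section \<open>Finite sums of matrix-like expressions\<close>

definition offdiag :: "'a \<Rightarrow> 'a \<Rightarrow> int" where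
  "offdiag u v = (if u = v then 0 else 1)"

definition kronecker :: "'a \<Rightarrow> 'a \<Rightarrow> int" where
  "kronecker u v = (if u = v then 1 else 0)"

lemma offdiag_sym: "offdiag v u = offdiag u v"
  unfolding offdiag_def by auto

lemma sum_offdiag_mult:
  assumes "finite V" "u \<in> V"
  shows "(\<Sum>v\<in>V. offdiag u v * f v) = sum f V - f u"
proof -
  have "(\<Sum>v\<in>V. offdiag u v * f v) = (\<Sum>v\<in>V. f v - (if u = v then f v else 0))"
    by (rule sum.cong) (auto simp: offdiag_def)
  also have "\<dots> = sum f V - f u"
    using assms by (simp add: sum_subtractf)
  finally show ?thesis .
qed

lemma sum_offdiag_mult':
  assumes "finite V" "u \<in> V"
  shows "(\<Sum>v\<in>V. offdiag v u * f v) = sum f V - f u"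
  using sum_offdiag_mult[OF assms, of f] by (simp add: offdiag_sym)

lemma sum_kronecker_mult:
  assumes "finite V" "u \<in> V"
  shows "(\<Sum>v\<in>V. kronecker u v * f v) = f u"
proof -
  have "(\<Sum>v\<in>V. kronecker u v * f v) = (\<Sum>v\<in>V. if u = v then f v else 0)"
    by (rule sum.cong) (auto simp: kronecker_def)
  also have "\<dots> = f u"
    using assms by simp
  finally show ?thesis .
qed

lemma sum_mult_kronecker:
  assumes "finite V" "u \<in> V"
  shows "(\<Sum>v\<in>V. f v * kronecker u v) = f u"
  using sum_kronecker_mult[OF assms, of f] by (simp add: mult.commute)

lemma sum_indicator_eq_card:
  assumes "finite V"
  shows "(\<Sum>w\<in>V. if P w then 1 else 0 :: int) = int (card {w\<in>V. P w})"
proof -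
  have "int (card {w\<in>V. P w}) = (\<Sum>w\<in>{w\<in>V. P w}. 1)"
    by simp
  also have "\<dots> = (\<Sum>w\<in>V. if P w then 1 else 0)"
    using assms by (rule sum.inter_filter)
  finally show ?thesis by simp
qed

lemma sum_rotate3:
  "(\<Sum>u\<in>V. \<Sum>v\<in>V. \<Sum>w\<in>V. f u v w) = (\<Sum>v\<in>V. \<Sum>w\<in>V. \<Sum>u\<in>V. f u v w)"
proof -
  have "(\<Sum>u\<in>V. \<Sum>v\<in>V. \<Sum>w\<in>V. f u v w) = (\<Sum>v\<in>V. \<Sum>u\<in>V. \<Sum>w\<in>V. f u v w)"
    by (rule sum.swap)
  also have "\<dots> = (\<Sum>v\<in>V. \<Sum>w\<in>V. \<Sum>u\<in>V. f u v w)"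
    by (rule sum.cong[OF refl], rule sum.swap)
  finally show ?thesis .
qed

lemma skew_quadratic_form_eq_0:
  fixes Z :: "'a \<Rightarrow> 'a \<Rightarrow> int"
  assumes skew: "\<And>u v. Z v u = - Z u v"
  shows "(\<Sum>u\<in>V. \<Sum>v\<in>V. Z u v * f u * f v) = 0"
proof -
  have "(\<Sum>u\<in>V. \<Sum>v\<in>V. Z u v * f u * f v) = (\<Sum>v\<in>V. \<Sum>u\<in>V. Z u v * f u * f v)"
    by (rule sum.swap)
  also have "\<dots> = - (\<Sum>v\<in>V. \<Sum>u\<in>V. Z v u * f v * f u)"
  proof (unfold sum_negf[symmetric], intro sum.cong refl)
    fix v u
    show "Z u v * f u * f v = - (Z v u * f v * f u)"
      using skew[of v u] by simp
  qed
  finally show ?thesis by simp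
qed

lemma sum_offdiag_triangle_sym:
  assumes "finite V" and sym: "\<And>v w. Z v w = Z w v"
  shows "(\<Sum>u\<in>V. \<Sum>v\<in>V. \<Sum>w\<in>V. offdiag u v * Z v w * Z w u)
    = (\<Sum>w\<in>V. (\<Sum>v\<in>V. Z w v)^2) - (\<Sum>v\<in>V. \<Sum>w\<in>V. (Z v w)^2)"
proof -
  have "(\<Sum>u\<in>V. \<Sum>v\<in>V. \<Sum>w\<in>V. offdiag u v * Z v w * Z w u)
      = (\<Sum>v\<in>V. \<Sum>w\<in>V. Z v w * (\<Sum>u\<in>V. offdiag u v * Z w u))"
    by (subst sum_rotate3) (simp add: sum_distrib_left ac_simps)
  also have "\<dots> = (\<Sum>v\<in>V. \<Sum>w\<in>V. Z v w * (\<Sum>u\<in>V. Z w u) - Z v w * Z w v)"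
    by (intro sum.cong refl) (simp add: sum_offdiag_mult'[OF \<open>finite V\<close>] algebra_simps)
  also have "\<dots> = (\<Sum>v\<in>V. \<Sum>w\<in>V. Z v w * (\<Sum>u\<in>V. Z w u)) - (\<Sum>v\<in>V. \<Sum>w\<in>V. (Z v w)^2)"
    by (simp add: sum_subtractf power2_eq_square sym[of _ v for v])
  also have "(\<Sum>v\<in>V. \<Sum>w\<in>V. Z v w * (\<Sum>u\<in>V. Z w u)) = (\<Sum>w\<in>V. (\<Sum>v\<in>V. Z w v)^2)"
    by (subst sum.swap) (simp add: power2_eq_square sum_distrib_right sym[of _ w for w])
  finally show ?thesis .
qed

lemma sum_offdiag_triangle_skew:
  assumes "finite V" and skew: "\<And>v w. Z v w = - Z w v"
  shows "(\<Sum>u\<in>V. \<Sum>v\<in>V. \<Sum>w\<in>V. offdiag u v * Z v w * Z w u)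
    = (\<Sum>v\<in>V. \<Sum>w\<in>V. (Z v w)^2) - (\<Sum>w\<in>V. (\<Sum>v\<in>V. Z w v)^2)"
proof -
  have column: "(\<Sum>v\<in>V. Z v w) = - (\<Sum>v\<in>V. Z w v)" for w
    by (subst sum_negf[symmetric]) (rule sum.cong, auto intro: skew)
  have "(\<Sum>u\<in>V. \<Sum>v\<in>V. \<Sum>w\<in>V. offdiag u v * Z v w * Z w u)
      = (\<Sum>v\<in>V. \<Sum>w\<in>V. Z v w * (\<Sum>u\<in>V. offdiag u v * Z w u))"
    by (subst sum_rotate3) (simp add: sum_distrib_left ac_simps)
  also have "\<dots> = (\<Sum>v\<in>V. \<Sum>w\<in>V. Z v w * (\<Sum>u\<in>V. Z w u) + (Z v w)^2)"
  proof (intro sum.cong refl)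
    fix v w assume "v \<in> V"
    then show "Z v w * (\<Sum>u\<in>V. offdiag u v * Z w u) = Z v w * (\<Sum>u\<in>V. Z w u) + (Z v w)^2"
      using skew[of w v] by (simp add: sum_offdiag_mult'[OF \<open>finite V\<close>] algebra_simps power2_eq_square)
  qed
  also have "\<dots> = (\<Sum>v\<in>V. \<Sum>w\<in>V. Z v w * (\<Sum>u\<in>V. Z w u)) + (\<Sum>v\<in>V. \<Sum>w\<in>V. (Z v w)^2)"
    by (simp add: sum.distrib)
  also have "(\<Sum>v\<in>V. \<Sum>w\<in>V. Z v w * (\<Sum>u\<in>V. Z w u)) = (\<Sum>w\<in>V. (\<Sum>v\<in>V. Z v w) * (\<Sum>u\<in>V. Z w u))"
    by (subst sum.swap) (simp add: sum_distrib_right)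
  also have "\<dots> = - (\<Sum>w\<in>V. (\<Sum>v\<in>V. Z w v)^2)"
    by (simp add: column power2_eq_square sum_negf)
  finally show ?thesis by simp
qed

section \<open>The matrices of a tournament\<close>

text \<open>In the notation of the
  header, \<open>arc\<close>, \<open>skew\<close>, \<open>offdiag\<close>, \<open>kronecker\<close>, \<open>score\<close>, \<open>defect\<close> and \<open>defect_row\<close> are
  \<open>A\<close>, \<open>S\<close>, \<open>J - I\<close>, \<open>I\<close>, \<open>s\<close>, \<open>X\<close> and \<open>X1\<close>; \<open>sym_part\<close> and \<open>skew_part\<close> below are \<open>B\<close> and
  \<open>K\<close>, the \<open>_norm\<close> constants are squared Euclidean norms and \<open>discrepancy\<close> is \<open>D\<close>.\<close>

locale finite_tournament =
  fixes V :: "'a set" and E :: "'a \<Rightarrow> 'a \<Rightarrow> bool"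
  assumes tournament: "tournament V E"
begin

lemma finite_V: "finite V"
  using tournament unfolding tournament_def by blast

lemma E_in_V: "E x y \<Longrightarrow> x \<in> V \<and> y \<in> V \<and> x \<noteq> y"
  using tournament unfolding tournament_def by blast

lemma E_total: "x \<in> V \<Longrightarrow> y \<in> V \<Longrightarrow> x \<noteq> y \<Longrightarrow> E x y \<or> E y x"
  using tournament unfolding tournament_def by blast

lemma E_asym: "E x y \<Longrightarrow> \<not> E y x"
  using tournament E_in_V unfolding tournament_def by blast

definition N :: int where
  "N = int (card V)"

definition arc :: "'a \<Rightarrow> 'a \<Rightarrow> int" where
  "arc u v = (if E u v then 1 else 0)"

definition skew :: "'a \<Rightarrow> 'a \<Rightarrow> int" where
  "skew u v = arc u v - arc v u"

definition score :: "'a \<Rightarrow> int" where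
  "score u = (\<Sum>w\<in>V. skew u w)"

definition skew_sq :: "'a \<Rightarrow> 'a \<Rightarrow> int" where
  "skew_sq u v = (\<Sum>w\<in>V. skew u w * skew w v)"

text \<open>Since \<open>-S\<^sup>2 = SS\<^sup>T\<close>, the matrix \<open>X = S\<^sup>2 + nI - J\<close> vanishes iff \<open>SS\<^sup>T = nI - J\<close>.\<close>

definition defect :: "'a \<Rightarrow> 'a \<Rightarrow> int" where
  "defect u v = skew_sq u v + N * kronecker u v - 1"

definition defect_row :: "'a \<Rightarrow> int" where
  "defect_row u = (\<Sum>v\<in>V. defect u v)"

definition score_norm :: int where
  "score_norm = (\<Sum>u\<in>V. (score u)^2)"

definition defect_norm :: int where
  "defect_norm = (\<Sum>u\<in>V. \<Sum>v\<in>V. (defect u v)^2)"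

definition defect_row_norm :: int where
  "defect_row_norm = (\<Sum>u\<in>V. (defect_row u)^2)"

definition discrepancy :: int where
  "discrepancy = defect_norm - defect_row_norm + (N - 2)^2 * score_norm"

lemma skew_antisym: "skew v u = - skew u v"
  unfolding skew_def by simp

lemma two_arc_eq: "u \<in> V \<Longrightarrow> v \<in> V \<Longrightarrow> 2 * arc u v = offdiag u v + skew u v"
  unfolding arc_def offdiag_def skew_def using E_total E_asym E_in_V by auto

lemma arc_add_converse: "u \<in> V \<Longrightarrow> v \<in> V \<Longrightarrow> arc u v + arc v u = offdiag u v"
  unfolding arc_def offdiag_def using E_total E_asym E_in_V by auto

lemma skew_mult_self: "u \<in> V \<Longrightarrow> v \<in> V \<Longrightarrow> skew u v * skew u v = offdiag u v"
  unfolding arc_def offdiag_def skew_def using E_total E_asym E_in_V by auto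

lemma sum_one_eq_N: "(\<Sum>v\<in>V. 1) = N"
  unfolding N_def by simp

lemma sum_offdiag_row: "u \<in> V \<Longrightarrow> (\<Sum>v\<in>V. offdiag u v) = N - 1"
  using sum_offdiag_mult[OF finite_V, of u "\<lambda>_. 1"] sum_one_eq_N by simp

lemma sum_offdiag_column: "u \<in> V \<Longrightarrow> (\<Sum>v\<in>V. offdiag v u) = N - 1"
  using sum_offdiag_mult'[OF finite_V, of u "\<lambda>_. 1"] sum_one_eq_N by simp

lemma sum_skew_column: "(\<Sum>u\<in>V. skew u v) = - score v"
  unfolding score_def by (subst skew_antisym) (simp add: sum_negf)

lemma sum_score: "(\<Sum>u\<in>V. score u) = 0"
proof -
  have "(\<Sum>u\<in>V. score u) = (\<Sum>w\<in>V. \<Sum>u\<in>V. skew u w)"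
    unfolding score_def by (rule sum.swap)
  also have "\<dots> = - (\<Sum>w\<in>V. score w)"
    by (simp add: sum_skew_column sum_negf)
  finally show ?thesis by simp
qed

lemma skew_sq_sym: "skew_sq u v = skew_sq v u"
  unfolding skew_sq_def by (rule sum.cong) (auto simp: skew_antisym[of u] skew_antisym[of _ v])

lemma defect_sym: "defect u v = defect v u"
  unfolding defect_def using skew_sq_sym by (simp add: kronecker_def eq_commute)

lemma skew_sq_diag: "u \<in> V \<Longrightarrow> skew_sq u u = 1 - N"
proof -
  assume u: "u \<in> V"
  have "skew_sq u u = - (\<Sum>w\<in>V. offdiag u w)"
    unfolding skew_sq_def
    by (subst sum_negf[symmetric], rule sum.cong) (auto simp: skew_antisym[of w u for w] skew_mult_self u)
  then show ?thesis
    using sum_offdiag_row[OF u] by simp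
qed

lemma defect_diag: "u \<in> V \<Longrightarrow> defect u u = 0"
  unfolding defect_def using skew_sq_diag by (simp add: kronecker_def)

lemma skew_sq_eq_defect: "skew_sq u v = defect u v - N * kronecker u v + 1"
  unfolding defect_def by simp

text \<open>\<open>X1 = S\<^sup>2 1 = Ss\<close>, as \<open>(nI - J)1 = 0\<close>.\<close>

lemma defect_row_eq: "u \<in> V \<Longrightarrow> defect_row u = (\<Sum>w\<in>V. skew u w * score w)"
proof -
  assume u: "u \<in> V"
  have "defect_row u = (\<Sum>v\<in>V. skew_sq u v) + N * (\<Sum>v\<in>V. kronecker u v) - N"
    unfolding defect_row_def defect_def using sum_one_eq_N
    by (simp add: sum.distrib sum_subtractf sum_distrib_left)
  also have "(\<Sum>v\<in>V. kronecker u v) = 1"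
    using sum_kronecker_mult[OF finite_V u, of "\<lambda>_. 1"] by simp
  also have "(\<Sum>v\<in>V. skew_sq u v) = (\<Sum>w\<in>V. skew u w * score w)"
    unfolding skew_sq_def score_def by (subst sum.swap) (simp add: sum_distrib_left)
  finally show ?thesis by simp
qed

lemma sum_defect_row: "(\<Sum>u\<in>V. defect_row u) = - score_norm"
proof -
  have "(\<Sum>u\<in>V. defect_row u) = (\<Sum>u\<in>V. \<Sum>w\<in>V. skew u w * score w)"
    by (rule sum.cong) (auto simp: defect_row_eq)
  also have "\<dots> = (\<Sum>w\<in>V. (\<Sum>u\<in>V. skew u w) * score w)"
    by (subst sum.swap) (simp add: sum_distrib_right)
  also have "\<dots> = - score_norm"
    unfolding score_norm_def by (simp add: sum_skew_column sum_negf power2_eq_square)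
  finally show ?thesis .
qed

lemma sum_defect: "(\<Sum>u\<in>V. \<Sum>v\<in>V. defect u v) = - score_norm"
  using sum_defect_row unfolding defect_row_def .

lemma sum_skew_column_products: "(\<Sum>u\<in>V. skew u w * skew u w') = - skew_sq w w'"
  unfolding skew_sq_def by (subst sum_negf[symmetric], rule sum.cong) (auto simp: skew_antisym[of _ w])

lemma sum_score_mult_skew: "v \<in> V \<Longrightarrow> (\<Sum>u\<in>V. score u * skew u v) = - defect_row v"
proof -
  assume v: "v \<in> V"
  have "(\<Sum>u\<in>V. score u * skew u v) = - (\<Sum>u\<in>V. skew v u * score u)"
    by (subst sum_negf[symmetric], rule sum.cong) (auto simp: skew_antisym[of _ v])
  then show ?thesis
    using defect_row_eq[OF v] by simp
qed

lemma sum_defect_row_mult_score: "(\<Sum>u\<in>V. defect_row u * score u) = 0"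
proof -
  have "(\<Sum>u\<in>V. defect_row u * score u) = (\<Sum>u\<in>V. \<Sum>w\<in>V. skew u w * score u * score w)"
    by (rule sum.cong) (auto simp: defect_row_eq sum_distrib_left sum_distrib_right ac_simps)
  also have "\<dots> = 0"
    by (rule skew_quadratic_form_eq_0) (rule skew_antisym)
  finally show ?thesis .
qed

lemma sum_defect_mult_scores:
  "(\<Sum>v\<in>V. \<Sum>w\<in>V. defect v w * (score v * score w)) = N * score_norm - defect_row_norm"
proof -
  have "defect_row_norm = (\<Sum>u\<in>V. (\<Sum>w\<in>V. skew u w * score w) * (\<Sum>w'\<in>V. skew u w' * score w'))"
    unfolding defect_row_norm_def power2_eq_square by (rule sum.cong) (auto simp: defect_row_eq)
  also have "\<dots> = (\<Sum>u\<in>V. \<Sum>w\<in>V. \<Sum>w'\<in>V. skew u w * score w * (skew u w' * score w'))"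
    by (simp add: sum_product)
  also have "\<dots> = (\<Sum>w\<in>V. \<Sum>w'\<in>V. \<Sum>u\<in>V. skew u w * score w * (skew u w' * score w'))"
    by (subst sum_rotate3) simp
  also have "\<dots> = (\<Sum>w\<in>V. \<Sum>w'\<in>V. score w * score w' * (\<Sum>u\<in>V. skew u w * skew u w'))"
    by (simp add: sum_distrib_left ac_simps)
  also have "\<dots> = (\<Sum>w\<in>V. \<Sum>w'\<in>V. - (defect w w' * (score w * score w'))
      + N * (kronecker w w' * score w * score w') - score w * score w')"
    by (simp add: sum_skew_column_products skew_sq_eq_defect algebra_simps)
  also have "\<dots> = - (\<Sum>w\<in>V. \<Sum>w'\<in>V. defect w w' * (score w * score w'))
      + N * (\<Sum>w\<in>V. \<Sum>w'\<in>V. kronecker w w' * score w * score w')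
      - (\<Sum>w\<in>V. \<Sum>w'\<in>V. score w * score w')"
    by (simp add: sum.distrib sum_subtractf sum_negf sum_distrib_left)
  also have "(\<Sum>w\<in>V. \<Sum>w'\<in>V. score w * score w') = 0"
    by (simp add: sum_product[symmetric] sum_score)
  also have "(\<Sum>w\<in>V. \<Sum>w'\<in>V. kronecker w w' * score w * score w') = score_norm"
    unfolding score_norm_def power2_eq_square
    by (rule sum.cong) (auto simp: sum_kronecker_mult[OF finite_V, where f="\<lambda>w'. score _ * score w'", simplified mult.assoc] mult.assoc)
  finally show ?thesis by simp
qed

section \<open>The trace of \<open>A\<^sup>5\<close>\<close>

definition walks2 :: "'a \<Rightarrow> 'a \<Rightarrow> int" where
  "walks2 v w = (\<Sum>x\<in>V. arc v x * arc x w)"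

definition closed_walks5 :: int where
  "closed_walks5 = (\<Sum>u\<in>V. \<Sum>v\<in>V. \<Sum>w\<in>V. arc u v * walks2 v w * walks2 w u)"

definition sym_part :: "'a \<Rightarrow> 'a \<Rightarrow> int" where
  "sym_part v w = (N - 1) * offdiag v w + defect v w"

definition skew_part :: "'a \<Rightarrow> 'a \<Rightarrow> int" where
  "skew_part v w = score v - score w - 2 * skew v w"

lemma sym_part_sym: "sym_part v w = sym_part w v"
  unfolding sym_part_def using defect_sym[of v w] offdiag_sym[of v w] by simp

lemma skew_part_antisym: "skew_part v w = - skew_part w v"
  unfolding skew_part_def using skew_antisym[of w v] by simp

lemma four_walks2_eq: "v \<in> V \<Longrightarrow> w \<in> V \<Longrightarrow> 4 * walks2 v w = sym_part v w + skew_part v w"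
proof -
  assume v: "v \<in> V" and w: "w \<in> V"
  have "4 * walks2 v w = (\<Sum>x\<in>V. (2 * arc v x) * (2 * arc x w))"
    unfolding walks2_def by (simp add: sum_distrib_left ac_simps)
  also have "\<dots> = (\<Sum>x\<in>V. (offdiag v x + skew v x) * (offdiag x w + skew x w))"
    by (rule sum.cong) (auto simp: two_arc_eq v w)
  also have "\<dots> = (\<Sum>x\<in>V. offdiag v x * offdiag x w) + (\<Sum>x\<in>V. offdiag v x * skew x w)
      + (\<Sum>x\<in>V. offdiag w x * skew v x) + skew_sq v w"
  proof -
    have "(offdiag v x + skew v x) * (offdiag x w + skew x w)
        = offdiag v x * offdiag x w + offdiag v x * skew x w + offdiag w x * skew v x + skew v x * skew x w" for x
      by (simp add: offdiag_def algebra_simps)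
    then show ?thesis
      unfolding skew_sq_def by (simp add: sum.distrib)
  qed
  also have "\<dots> = (N - 1 - offdiag v w) + (- score w - skew v w) + (score v - skew v w) + skew_sq v w"
    using sum_offdiag_mult[OF finite_V v, of "\<lambda>x. offdiag x w"] sum_offdiag_column[OF w]
      sum_offdiag_mult[OF finite_V v, of "\<lambda>x. skew x w"] sum_skew_column
      sum_offdiag_mult[OF finite_V w, of "skew v"]
    unfolding score_def by simp
  finally show ?thesis
    by (cases "v = w") (simp_all add: sym_part_def skew_part_def defect_def offdiag_def kronecker_def)
qed

definition trace_sym :: int where
  "trace_sym = (\<Sum>u\<in>V. \<Sum>v\<in>V. \<Sum>w\<in>V. offdiag u v * sym_part v w * sym_part w u)"

definition trace_skew :: int where
  "trace_skew = (\<Sum>u\<in>V. \<Sum>v\<in>V. \<Sum>w\<in>V. offdiag u v * skew_part v w * skew_part w u)"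

definition trace_mixed :: int where
  "trace_mixed = (\<Sum>u\<in>V. \<Sum>v\<in>V. \<Sum>w\<in>V.
     skew u v * sym_part v w * skew_part w u + skew u v * skew_part v w * sym_part w u)"

text \<open>Exchanging \<open>u\<close> and \<open>v\<close> transposes all three factors, so the terms with an odd number
  of skew-symmetric factors cancel.\<close>

lemma closed_walks5_split: "32 * closed_walks5 = trace_sym + trace_skew + trace_mixed"
proof -
  define F where "F u v w = (offdiag u v + skew u v) * (sym_part v w + skew_part v w)
    * (sym_part w u + skew_part w u)" for u v w
  have "32 * closed_walks5 = (\<Sum>u\<in>V. \<Sum>v\<in>V. \<Sum>w\<in>V. F u v w)"
    unfolding closed_walks5_def sum_distrib_left
  proof (intro sum.cong refl)
    fix u v w assume u: "u \<in> V" and v: "v \<in> V" and w: "w \<in> V"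
    have "32 * (arc u v * walks2 v w * walks2 w u) = (2 * arc u v) * (4 * walks2 v w) * (4 * walks2 w u)"
      by simp
    also have "\<dots> = F u v w"
      unfolding F_def using two_arc_eq[OF u v] four_walks2_eq[OF v w] four_walks2_eq[OF w u] by simp
    finally show "32 * (arc u v * walks2 v w * walks2 w u) = F u v w" .
  qed
  moreover have "(\<Sum>u\<in>V. \<Sum>v\<in>V. \<Sum>w\<in>V. F u v w) = (\<Sum>u\<in>V. \<Sum>v\<in>V. \<Sum>w\<in>V. F v u w)"
    by (rule sum.swap)
  moreover have "(\<Sum>u\<in>V. \<Sum>v\<in>V. \<Sum>w\<in>V. F u v w + F v u w) = 2 * (trace_sym + trace_skew + trace_mixed)"
    unfolding trace_sym_def trace_skew_def trace_mixed_def sum.distrib[symmetric] sum_distrib_left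
  proof (intro sum.cong refl)
    fix u v w
    have "F v u w = (offdiag u v - skew u v) * (sym_part v w - skew_part v w) * (sym_part w u - skew_part w u)"
      unfolding F_def using offdiag_sym[of v u] skew_antisym[of v u] sym_part_sym[of u w]
        skew_part_antisym[of u w] sym_part_sym[of w v] skew_part_antisym[of w v]
      by simp
    then show "F u v w + F v u w = 2 * (offdiag u v * sym_part v w * sym_part w u
        + offdiag u v * skew_part v w * skew_part w u
        + (skew u v * sym_part v w * skew_part w u + skew u v * skew_part v w * sym_part w u))"
      unfolding F_def by (simp add: algebra_simps)
  qed
  ultimately show ?thesis by (simp add: sum.distrib)
qed

lemma double_sum_offdiag: "(\<Sum>v\<in>V. \<Sum>w\<in>V. offdiag v w) = N * (N - 1)"
  using sum_offdiag_row sum_one_eq_N by (simp add: sum_distrib_right[symmetric])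

lemma double_sum_offdiag_defect: "(\<Sum>v\<in>V. \<Sum>w\<in>V. offdiag v w * defect v w) = - score_norm"
proof -
  have "(\<Sum>v\<in>V. \<Sum>w\<in>V. offdiag v w * defect v w) = (\<Sum>v\<in>V. defect_row v)"
    by (rule sum.cong[OF refl]) (simp add: sum_offdiag_mult[OF finite_V] defect_row_def defect_diag)
  then show ?thesis
    using sum_defect_row by simp
qed

lemma double_sum_offdiag_defect_row: "(\<Sum>v\<in>V. \<Sum>w\<in>V. offdiag v w * defect_row v) = - (N - 1) * score_norm"
proof -
  have "(\<Sum>v\<in>V. \<Sum>w\<in>V. offdiag v w * defect_row v) = (\<Sum>v\<in>V. (N - 1) * defect_row v)"
    by (rule sum.cong[OF refl]) (simp add: sum_offdiag_row sum_distrib_right[symmetric])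
  also have "\<dots> = (N - 1) * (\<Sum>v\<in>V. defect_row v)"
    by (simp add: sum_distrib_left)
  finally show ?thesis
    using sum_defect_row by (simp add: algebra_simps)
qed

lemma double_sum_offdiag_defect_row': "(\<Sum>v\<in>V. \<Sum>w\<in>V. offdiag v w * defect_row w) = - (N - 1) * score_norm"
proof -
  have "(\<Sum>v\<in>V. \<Sum>w\<in>V. offdiag v w * defect_row w) = (\<Sum>w\<in>V. \<Sum>v\<in>V. offdiag w v * defect_row w)"
    by (subst sum.swap) (simp add: offdiag_sym[of _ "x" for x])
  then show ?thesis
    using double_sum_offdiag_defect_row by simp
qed

lemma double_sum_offdiag_scores: "(\<Sum>v\<in>V. \<Sum>w\<in>V. offdiag v w * (score v * score w)) = - score_norm"
proof -
  have "(\<Sum>v\<in>V. \<Sum>w\<in>V. offdiag v w * (score v * score w)) = (\<Sum>v\<in>V. score v * (\<Sum>w\<in>V. score w) - score v * score v)"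
    by (rule sum.cong[OF refl])
      (simp add: sum_offdiag_mult[OF finite_V, of _ "\<lambda>w. score _ * score w", simplified] sum_distrib_left)
  then show ?thesis
    using sum_score unfolding score_norm_def by (simp add: sum_subtractf power2_eq_square sum_negf)
qed

lemma double_sum_offdiag_kronecker: "(\<Sum>v\<in>V. \<Sum>w\<in>V. offdiag v w * kronecker v w) = 0"
proof -
  have vanish: "offdiag v w * kronecker v w = 0" for v w
    by (simp add: offdiag_def kronecker_def)
  show ?thesis by (simp only: vanish sum.neutral_const)
qed

lemma double_sum_defect_kronecker: "(\<Sum>v\<in>V. \<Sum>w\<in>V. defect v w * kronecker v w) = 0"
  by (simp add: sum_mult_kronecker[OF finite_V] defect_diag)

lemma double_sum_defect_defect_row: "(\<Sum>v\<in>V. \<Sum>w\<in>V. defect v w * defect_row v) = defect_row_norm"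
  unfolding defect_row_norm_def defect_row_def by (simp add: power2_eq_square sum_distrib_right)

lemma double_sum_defect_defect_row': "(\<Sum>v\<in>V. \<Sum>w\<in>V. defect v w * defect_row w) = defect_row_norm"
proof -
  have "(\<Sum>v\<in>V. \<Sum>w\<in>V. defect v w * defect_row w) = (\<Sum>w\<in>V. \<Sum>v\<in>V. defect w v * defect_row w)"
    by (subst sum.swap) (simp add: defect_sym[of _ "x" for x])
  then show ?thesis
    using double_sum_defect_defect_row by simp
qed

lemma double_sum_defect_sq: "(\<Sum>v\<in>V. \<Sum>w\<in>V. defect v w * defect v w) = defect_norm"
  unfolding defect_norm_def by (simp add: power2_eq_square)

lemma double_sum_skew_sq: "(\<Sum>v\<in>V. \<Sum>w\<in>V. skew v w * skew v w) = N * (N - 1)"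
  using double_sum_offdiag by (simp add: skew_mult_self)

lemma double_sum_score_skew: "(\<Sum>v\<in>V. \<Sum>w\<in>V. score v * skew v w) = score_norm"
  unfolding score_norm_def by (simp add: sum_distrib_left[symmetric] score_def[symmetric] power2_eq_square)

lemma double_sum_score_skew': "(\<Sum>v\<in>V. \<Sum>w\<in>V. score w * skew v w) = - score_norm"
proof -
  have "(\<Sum>v\<in>V. \<Sum>w\<in>V. score w * skew v w) = (\<Sum>w\<in>V. score w * (\<Sum>v\<in>V. skew v w))"
    by (subst sum.swap) (simp add: sum_distrib_left)
  then show ?thesis
    unfolding score_norm_def by (simp add: sum_skew_column power2_eq_square sum_negf)
qed

lemma double_sum_scores: "(\<Sum>v\<in>V. \<Sum>w\<in>V. score v * score w) = 0"
  by (simp add: sum_product[symmetric] sum_score)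

lemma double_sum_score_sq: "(\<Sum>v\<in>V. \<Sum>w\<in>V. score v * score v) = N * score_norm"
  unfolding score_norm_def using sum_one_eq_N by (simp add: power2_eq_square sum_distrib_left)

lemma double_sum_score_sq': "(\<Sum>v\<in>V. \<Sum>w\<in>V. score w * score w) = N * score_norm"
  unfolding score_norm_def using sum_one_eq_N
  by (simp add: power2_eq_square sum_distrib_right[symmetric] mult.commute)

lemma sum_sym_part_row: "w \<in> V \<Longrightarrow> (\<Sum>v\<in>V. sym_part w v) = (N - 1) * (N - 1) + defect_row w"
  unfolding sym_part_def defect_row_def by (simp add: sum.distrib sum_distrib_left[symmetric] sum_offdiag_row)

lemma sum_skew_part_row: "w \<in> V \<Longrightarrow> (\<Sum>v\<in>V. skew_part w v) = (N - 2) * score w"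
proof -
  have "(\<Sum>v\<in>V. skew_part w v) = (\<Sum>v\<in>V. score w) - (\<Sum>v\<in>V. score v) - 2 * (\<Sum>v\<in>V. skew w v)"
    unfolding skew_part_def by (simp add: sum_subtractf sum_distrib_left)
  then show ?thesis
    using sum_score sum_one_eq_N unfolding score_def[symmetric] by (simp add: algebra_simps)
qed

lemma trace_sym_eq:
  "trace_sym = N * (N - 1)^3 * (N - 2) - 2 * (N - 1) * (N - 2) * score_norm + defect_row_norm - defect_norm"
proof -
  have rows: "(\<Sum>w\<in>V. (\<Sum>v\<in>V. sym_part w v)^2)
      = (N - 1)^4 * (\<Sum>w\<in>V. 1) + 2 * (N - 1)^2 * (\<Sum>w\<in>V. defect_row w) + defect_row_norm"
  proof -
    have "(\<Sum>w\<in>V. (\<Sum>v\<in>V. sym_part w v)^2)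
        = (\<Sum>w\<in>V. (N - 1)^4 * 1 + 2 * (N - 1)^2 * defect_row w + (defect_row w)^2)"
      by (rule sum.cong[OF refl]) (simp add: sum_sym_part_row power2_eq_square power4_eq_xxxx algebra_simps)
    then show ?thesis
      unfolding defect_row_norm_def by (simp only: sum.distrib sum_distrib_left[symmetric])
  qed
  have entries: "(\<Sum>v\<in>V. \<Sum>w\<in>V. (sym_part v w)^2)
      = (N - 1)^2 * (\<Sum>v\<in>V. \<Sum>w\<in>V. offdiag v w) + 2 * (N - 1) * (\<Sum>v\<in>V. \<Sum>w\<in>V. offdiag v w * defect v w)
        + (\<Sum>v\<in>V. \<Sum>w\<in>V. defect v w * defect v w)"
  proof -
    have "(sym_part v w)^2 = (N - 1)^2 * offdiag v w + 2 * (N - 1) * (offdiag v w * defect v w)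
        + defect v w * defect v w" for v w
      by (simp add: sym_part_def offdiag_def power2_eq_square algebra_simps)
    then show ?thesis
      by (simp only: sum.distrib sum_distrib_left[symmetric])
  qed
  have "trace_sym = (\<Sum>w\<in>V. (\<Sum>v\<in>V. sym_part w v)^2) - (\<Sum>v\<in>V. \<Sum>w\<in>V. (sym_part v w)^2)"
    unfolding trace_sym_def by (rule sum_offdiag_triangle_sym[OF finite_V sym_part_sym])
  then show ?thesis
    unfolding rows entries sum_one_eq_N sum_defect_row double_sum_offdiag double_sum_offdiag_defect
      double_sum_defect_sq
    by (simp add: algebra_simps power2_eq_square power3_eq_cube power4_eq_xxxx)
qed

lemma trace_skew_eq: "trace_skew = 4 * N * (N - 1) - (N * N - 6 * N + 12) * score_norm"
proof -
  have rows: "(\<Sum>w\<in>V. (\<Sum>v\<in>V. skew_part w v)^2) = (N - 2) * (N - 2) * score_norm"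
  proof -
    have "(\<Sum>w\<in>V. (\<Sum>v\<in>V. skew_part w v)^2) = (\<Sum>w\<in>V. (N - 2) * (N - 2) * (score w)^2)"
      by (rule sum.cong[OF refl]) (simp add: sum_skew_part_row power2_eq_square algebra_simps)
    then show ?thesis
      unfolding score_norm_def by (simp only: sum_distrib_left[symmetric])
  qed
  have entries: "(\<Sum>v\<in>V. \<Sum>w\<in>V. (skew_part v w)^2)
      = (\<Sum>v\<in>V. \<Sum>w\<in>V. score v * score v) + (\<Sum>v\<in>V. \<Sum>w\<in>V. score w * score w)
        + 4 * (\<Sum>v\<in>V. \<Sum>w\<in>V. skew v w * skew v w) - 2 * (\<Sum>v\<in>V. \<Sum>w\<in>V. score v * score w)
        - 4 * (\<Sum>v\<in>V. \<Sum>w\<in>V. score v * skew v w) + 4 * (\<Sum>v\<in>V. \<Sum>w\<in>V. score w * skew v w)"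
  proof -
    have "(skew_part v w)^2 = score v * score v + score w * score w + 4 * (skew v w * skew v w)
        - 2 * (score v * score w) - 4 * (score v * skew v w) + 4 * (score w * skew v w)" for v w
      by (simp add: skew_part_def power2_eq_square algebra_simps)
    then show ?thesis
      by (simp only: sum.distrib sum_subtractf sum_distrib_left[symmetric])
  qed
  have "trace_skew = (\<Sum>v\<in>V. \<Sum>w\<in>V. (skew_part v w)^2) - (\<Sum>w\<in>V. (\<Sum>v\<in>V. skew_part w v)^2)"
    unfolding trace_skew_def by (rule sum_offdiag_triangle_skew[OF finite_V skew_part_antisym])
  then show ?thesis
    unfolding rows entries double_sum_score_sq double_sum_score_sq' double_sum_skew_sq double_sum_scores
      double_sum_score_skew double_sum_score_skew'
    by (simp add: algebra_simps)
qed

lemma sum_skew_part_mult_skew: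
  assumes "w \<in> V" "v \<in> V"
  shows "(\<Sum>u\<in>V. skew_part w u * skew u v) = defect_row v - score w * score v - 2 * skew_sq w v"
proof -
  have "(\<Sum>u\<in>V. skew_part w u * skew u v)
      = (\<Sum>u\<in>V. score w * skew u v - score u * skew u v - 2 * (skew w u * skew u v))"
    by (rule sum.cong) (simp_all add: skew_part_def algebra_simps)
  also have "\<dots> = score w * (\<Sum>u\<in>V. skew u v) - (\<Sum>u\<in>V. score u * skew u v) - 2 * skew_sq w v"
    unfolding skew_sq_def by (simp only: sum_subtractf sum_distrib_left[symmetric])
  finally show ?thesis
    using sum_skew_column sum_score_mult_skew[OF \<open>v \<in> V\<close>] by simp
qed

lemma sum_skew_mult_skew_part:
  assumes "w \<in> V" "v \<in> V"
  shows "(\<Sum>u\<in>V. skew w u * skew_part u v) = defect_row w - score w * score v - 2 * skew_sq w v"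
proof -
  have "(\<Sum>u\<in>V. skew w u * skew_part u v)
      = (\<Sum>u\<in>V. skew w u * score u - score v * skew w u - 2 * (skew w u * skew u v))"
    by (rule sum.cong) (simp_all add: skew_part_def algebra_simps)
  also have "\<dots> = (\<Sum>u\<in>V. skew w u * score u) - score v * score w - 2 * skew_sq w v"
    unfolding skew_sq_def score_def by (simp only: sum_subtractf sum_distrib_left[symmetric])
  finally show ?thesis
    using defect_row_eq[OF \<open>w \<in> V\<close>] by (simp add: algebra_simps)
qed

definition anticommutator :: "'a \<Rightarrow> 'a \<Rightarrow> int" where
  "anticommutator v w = defect_row v + defect_row w - 2 * (score v * score w) - 4 * defect v w
     + 4 * N * kronecker v w - 4"

lemma anticommutator_eq:
  assumes "v \<in> V" "w \<in> V"
  shows "(\<Sum>u\<in>V. skew_part w u * skew u v) + (\<Sum>u\<in>V. skew w u * skew_part u v) = anticommutator v w"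
  unfolding anticommutator_def sum_skew_part_mult_skew[OF assms(2,1)] sum_skew_mult_skew_part[OF assms(2,1)]
    skew_sq_eq_defect
  using defect_sym[of w v] by (simp add: kronecker_def eq_commute)

lemma double_sum_offdiag_anticommutator:
  "(\<Sum>v\<in>V. \<Sum>w\<in>V. offdiag v w * anticommutator v w) = (8 - 2 * N) * score_norm - 4 * N * (N - 1)"
proof -
  have "offdiag v w * anticommutator v w = offdiag v w * defect_row v + offdiag v w * defect_row w
      - 2 * (offdiag v w * (score v * score w)) - 4 * (offdiag v w * defect v w)
      + 4 * N * (offdiag v w * kronecker v w) - 4 * offdiag v w" for v w
    unfolding anticommutator_def by (simp add: algebra_simps)
  then show ?thesis
    by (simp only: sum.distrib sum_subtractf sum_distrib_left[symmetric] double_sum_offdiag_defect_row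
        double_sum_offdiag_defect_row' double_sum_offdiag_scores double_sum_offdiag_defect
        double_sum_offdiag_kronecker double_sum_offdiag) (simp add: algebra_simps)
qed

lemma double_sum_defect_anticommutator:
  "(\<Sum>v\<in>V. \<Sum>w\<in>V. defect v w * anticommutator v w)
     = 4 * defect_row_norm - 4 * defect_norm - 2 * N * score_norm + 4 * score_norm"
proof -
  have "defect v w * anticommutator v w = defect v w * defect_row v + defect v w * defect_row w
      - 2 * (defect v w * (score v * score w)) - 4 * (defect v w * defect v w)
      + 4 * N * (defect v w * kronecker v w) - 4 * defect v w" for v w
    unfolding anticommutator_def by (simp add: algebra_simps)
  then show ?thesis
    by (simp only: sum.distrib sum_subtractf sum_distrib_left[symmetric] double_sum_defect_defect_row
        double_sum_defect_defect_row' sum_defect_mult_scores double_sum_defect_sq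
        double_sum_defect_kronecker sum_defect) (simp add: algebra_simps)
qed

lemma trace_mixed_eq:
  "trace_mixed = 4 * defect_row_norm - 4 * defect_norm - 4 * N * (N - 1) * (N - 1)
     + (- 2 * N * N + 8 * N - 4) * score_norm"
proof -
  have "trace_mixed = (\<Sum>v\<in>V. \<Sum>w\<in>V. sym_part v w * (\<Sum>u\<in>V. skew_part w u * skew u v))
      + (\<Sum>w\<in>V. \<Sum>u\<in>V. sym_part w u * (\<Sum>v\<in>V. skew u v * skew_part v w))"
    unfolding trace_mixed_def sum.distrib
    by (subst sum_rotate3, subst (2) sum_rotate3[of "\<lambda>w u v. _ u v w", symmetric])
      (simp add: sum_distrib_left ac_simps)
  also have "\<dots> = (\<Sum>v\<in>V. \<Sum>w\<in>V. sym_part v w * anticommutator v w)"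
    unfolding sum.distrib[symmetric] by (intro sum.cong refl) (simp add: anticommutator_eq flip: distrib_left)
  also have "\<dots> = (N - 1) * (\<Sum>v\<in>V. \<Sum>w\<in>V. offdiag v w * anticommutator v w)
      + (\<Sum>v\<in>V. \<Sum>w\<in>V. defect v w * anticommutator v w)"
  proof -
    have "sym_part v w * anticommutator v w
        = (N - 1) * (offdiag v w * anticommutator v w) + defect v w * anticommutator v w" for v w
      unfolding sym_part_def by (simp add: algebra_simps)
    then show ?thesis
      by (simp only: sum.distrib sum_distrib_left[symmetric])
  qed
  finally show ?thesis
    unfolding double_sum_offdiag_anticommutator double_sum_defect_anticommutator by (simp add: algebra_simps)
qed

theorem closed_walks5_eq_discrepancy:
  "32 * closed_walks5 = (N + 1) * N * (N - 1) * (N - 2) * (N - 3) - 5 * discrepancy"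
  unfolding closed_walks5_split trace_sym_eq trace_skew_eq trace_mixed_eq discrepancy_def
  by (simp add: algebra_simps power2_eq_square power3_eq_cube)

section \<open>Nonnegativity of the discrepancy\<close>

lemma score_norm_nonneg: "0 \<le> score_norm"
  unfolding score_norm_def by (simp add: sum_nonneg)

lemma score_norm_eq_0_iff: "score_norm = 0 \<longleftrightarrow> (\<forall>u\<in>V. score u = 0)"
  unfolding score_norm_def using finite_V by (simp add: sum_nonneg_eq_0_iff)

lemma defect_norm_eq_0_iff: "defect_norm = 0 \<longleftrightarrow> (\<forall>u\<in>V. \<forall>v\<in>V. defect u v = 0)"
  unfolding defect_norm_def using finite_V by (simp add: sum_nonneg_eq_0_iff sum_nonneg)

lemma sum_skew_mult_wedge:
  "(\<Sum>i\<in>V. \<Sum>j\<in>V. skew i j * (defect_row i * score j - score i * defect_row j)) = 2 * defect_row_norm"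
proof -
  have "(\<Sum>i\<in>V. \<Sum>j\<in>V. skew i j * (defect_row i * score j - score i * defect_row j))
      = (\<Sum>i\<in>V. \<Sum>j\<in>V. defect_row i * (skew i j * score j))
        - (\<Sum>i\<in>V. \<Sum>j\<in>V. defect_row j * (score i * skew i j))"
    by (simp add: sum_subtractf algebra_simps)
  also have "(\<Sum>i\<in>V. \<Sum>j\<in>V. defect_row i * (skew i j * score j)) = defect_row_norm"
    unfolding defect_row_norm_def power2_eq_square
    by (rule sum.cong[OF refl]) (simp add: sum_distrib_left[symmetric] defect_row_eq)
  also have "(\<Sum>i\<in>V. \<Sum>j\<in>V. defect_row j * (score i * skew i j))
      = (\<Sum>j\<in>V. defect_row j * (\<Sum>i\<in>V. score i * skew i j))"
    by (subst sum.swap) (simp add: sum_distrib_left)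
  also have "\<dots> = - defect_row_norm"
    unfolding defect_row_norm_def power2_eq_square by (simp add: sum_score_mult_skew sum_negf)
  finally show ?thesis by simp
qed

lemma sum_wedge_sq:
  "(\<Sum>i\<in>V. \<Sum>j\<in>V. (defect_row i * score j - score i * defect_row j)^2) = 2 * defect_row_norm * score_norm"
proof -
  have "(defect_row i * score j - score i * defect_row j)^2
      = (defect_row i)^2 * (score j)^2 - 2 * ((defect_row i * score i) * (defect_row j * score j))
        + (score i)^2 * (defect_row j)^2" for i j
    by (simp add: power2_eq_square algebra_simps)
  then have "(\<Sum>i\<in>V. \<Sum>j\<in>V. (defect_row i * score j - score i * defect_row j)^2)
      = defect_row_norm * score_norm
        - 2 * ((\<Sum>i\<in>V. defect_row i * score i) * (\<Sum>j\<in>V. defect_row j * score j))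
        + score_norm * defect_row_norm"
    unfolding defect_row_norm_def score_norm_def sum_product
    by (simp only: sum.distrib sum_subtractf sum_distrib_left[symmetric])
  then show ?thesis
    using sum_defect_row_mult_score by simp
qed

text \<open>Cauchy-Schwarz for \<open>S\<close> and the skew-symmetric matrix \<open>(X1)s\<^sup>T - s(X1)\<^sup>T\<close>.\<close>

lemma defect_row_norm_le: "2 * defect_row_norm \<le> N * (N - 1) * score_norm"
proof (cases "score_norm = 0")
  case True
  then have "defect_row_norm = 0"
    unfolding defect_row_norm_def by (simp add: score_norm_eq_0_iff defect_row_eq)
  then show ?thesis
    using True by simp
next
  case False
  then have pos: "0 < score_norm"
    using score_norm_nonneg by simp
  define w where "w i j = defect_row i * score j - score i * defect_row j" for i j
  have "0 \<le> (\<Sum>i\<in>V. \<Sum>j\<in>V. (score_norm * skew i j - w i j)^2)"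
    by (simp add: sum_nonneg)
  also have "\<dots> = score_norm * score_norm * (\<Sum>i\<in>V. \<Sum>j\<in>V. skew i j * skew i j)
      - 2 * score_norm * (\<Sum>i\<in>V. \<Sum>j\<in>V. skew i j * w i j) + (\<Sum>i\<in>V. \<Sum>j\<in>V. (w i j)^2)"
  proof -
    have "(score_norm * skew i j - w i j)^2 = score_norm * score_norm * (skew i j * skew i j)
        - 2 * score_norm * (skew i j * w i j) + (w i j)^2" for i j
      by (simp add: power2_eq_square algebra_simps)
    then show ?thesis
      by (simp only: sum.distrib sum_subtractf sum_distrib_left[symmetric])
  qed
  also have "\<dots> = score_norm * (score_norm * (N * (N - 1)) - 2 * defect_row_norm)"
    unfolding w_def double_sum_skew_sq sum_skew_mult_wedge sum_wedge_sq by (simp add: algebra_simps)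
  finally have "0 \<le> score_norm * (N * (N - 1)) - 2 * defect_row_norm"
    using pos by (simp add: zero_le_mult_iff)
  then show ?thesis
    by (simp add: algebra_simps)
qed

text \<open>For \<open>u \<noteq> v\<close>, \<open>(S\<^sup>2)\<^sub>u\<^sub>v\<close> is a sum of \<open>n - 2\<close> signs \<open>\<plusminus>1\<close>.\<close>

lemma even_defect:
  assumes odd: "odd N" and u: "u \<in> V" and v: "v \<in> V"
  shows "even (defect u v)"
proof (cases "u = v")
  case True
  then show ?thesis
    using defect_diag u by simp
next
  case False
  have "skew_sq u v - (N - 2) = (\<Sum>w\<in>V. skew u w * skew w v - offdiag u w * offdiag w v)"
    using sum_offdiag_mult[OF finite_V u, of "\<lambda>w. offdiag w v"] sum_offdiag_column[OF v] False
    unfolding skew_sq_def by (simp add: sum_subtractf offdiag_def)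
  also have "\<dots> = (\<Sum>w\<in>V. (skew u w * skew w v) * (1 - skew u w * skew w v))"
  proof (rule sum.cong[OF refl])
    fix w assume w: "w \<in> V"
    have "offdiag u w * offdiag w v = (skew u w * skew w v) * (skew u w * skew w v)"
      using skew_mult_self[OF u w] skew_mult_self[OF w v] by (simp add: algebra_simps)
    then show "skew u w * skew w v - offdiag u w * offdiag w v
        = (skew u w * skew w v) * (1 - skew u w * skew w v)"
      by (simp add: algebra_simps)
  qed
  finally have "even (skew_sq u v - (N - 2))"
    by (auto intro!: dvd_sum)
  then show ?thesis
    using odd False unfolding defect_def kronecker_def by simp
qed

text \<open>An even integer \<open>x\<close> satisfies \<open>x\<^sup>2 + 2x \<ge> 0\<close>, and the entries of \<open>X\<close> sum to \<open>-|s|\<^sup>2\<close>.\<close>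

lemma defect_norm_ge: "odd N \<Longrightarrow> 2 * score_norm \<le> defect_norm"
proof -
  assume odd: "odd N"
  have "0 \<le> (\<Sum>u\<in>V. \<Sum>v\<in>V. (defect u v)^2 + 2 * defect u v)"
  proof (intro sum_nonneg)
    fix u v assume "u \<in> V" "v \<in> V"
    then obtain k where k: "defect u v = 2 * k"
      using even_defect[OF odd] by blast
    have "0 \<le> k * (k + 1)"
      by (cases "k \<ge> 0") (auto simp: mult_nonpos_nonpos)
    then show "0 \<le> (defect u v)^2 + 2 * defect u v"
      unfolding k by (simp add: power2_eq_square algebra_simps)
  qed
  also have "\<dots> = defect_norm + 2 * (\<Sum>u\<in>V. \<Sum>v\<in>V. defect u v)"
    unfolding defect_norm_def by (simp add: sum.distrib sum_distrib_left)
  finally show ?thesis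
    using sum_defect by simp
qed

lemma discrepancy_lower_bound:
  "2 * (defect_norm - 2 * score_norm) + (N - 3) * (N - 4) * score_norm \<le> 2 * discrepancy"
proof -
  have "2 * discrepancy - (2 * (defect_norm - 2 * score_norm) + (N - 3) * (N - 4) * score_norm)
      = N * (N - 1) * score_norm - 2 * defect_row_norm"
    unfolding discrepancy_def by (simp add: algebra_simps power2_eq_square)
  then show ?thesis
    using defect_row_norm_le by linarith
qed

lemma discrepancy_nonneg:
  assumes "odd N" "5 \<le> N"
  shows "0 \<le> discrepancy"
proof -
  have "0 \<le> (N - 3) * (N - 4) * score_norm"
    using assms score_norm_nonneg by simp
  moreover have "0 \<le> 2 * (defect_norm - 2 * score_norm)"
    using defect_norm_ge[OF assms(1)] by simp
  ultimately have "0 \<le> 2 * discrepancy"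
    using discrepancy_lower_bound by (meson add_nonneg_nonneg order_trans)
  then show ?thesis
    by simp
qed

lemma discrepancy_eq_0_iff:
  assumes "odd N" "5 \<le> N"
  shows "discrepancy = 0 \<longleftrightarrow> (\<forall>u\<in>V. score u = 0) \<and> (\<forall>u\<in>V. \<forall>v\<in>V. defect u v = 0)"
proof
  assume zero: "discrepancy = 0"
  have squeeze: "P = 0 \<and> defect_norm = 2 * score_norm"
    if "0 \<le> P" and "2 * (defect_norm - 2 * score_norm) + P \<le> 2 * discrepancy" for P
    using that zero defect_norm_ge[OF assms(1)] by auto
  have "0 \<le> (N - 3) * (N - 4) * score_norm"
    using assms score_norm_nonneg by simp
  then have "(N - 3) * (N - 4) * score_norm = 0" and "defect_norm = 2 * score_norm"
    using squeeze discrepancy_lower_bound by blast+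
  moreover have "(N - 3) * (N - 4) \<noteq> 0"
    using assms by simp
  ultimately have "score_norm = 0 \<and> defect_norm = 0"
    by simp
  then show "(\<forall>u\<in>V. score u = 0) \<and> (\<forall>u\<in>V. \<forall>v\<in>V. defect u v = 0)"
    by (simp add: score_norm_eq_0_iff defect_norm_eq_0_iff)
next
  assume "(\<forall>u\<in>V. score u = 0) \<and> (\<forall>u\<in>V. \<forall>v\<in>V. defect u v = 0)"
  then show "discrepancy = 0"
    unfolding discrepancy_def defect_norm_def defect_row_norm_def defect_row_def score_norm_def by simp
qed

section \<open>Double regularity in terms of scores and the defect matrix\<close>

definition outdeg :: "'a \<Rightarrow> int" where
  "outdeg u = (\<Sum>w\<in>V. arc u w)"

definition common_out :: "'a \<Rightarrow> 'a \<Rightarrow> int" where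
  "common_out u v = (\<Sum>w\<in>V. arc u w * arc v w)"

lemma outdeg_eq_card: "outdeg u = int (card (out_nbrs V E u))"
  unfolding outdeg_def arc_def out_nbrs_def by (rule sum_indicator_eq_card[OF finite_V])

lemma common_out_eq_card: "common_out u v = int (card (out_nbrs (out_nbrs V E v) E u))"
proof -
  have "out_nbrs (out_nbrs V E v) E u = {w\<in>V. E u w \<and> E v w}"
    unfolding out_nbrs_def by auto
  moreover have "common_out u v = (\<Sum>w\<in>V. if E u w \<and> E v w then 1 else 0)"
    unfolding common_out_def by (rule sum.cong) (auto simp: arc_def)
  ultimately show ?thesis
    by (simp add: sum_indicator_eq_card[OF finite_V])
qed

lemma score_eq_outdeg: "u \<in> V \<Longrightarrow> score u = 2 * outdeg u - (N - 1)"
proof -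
  assume u: "u \<in> V"
  have "score u = outdeg u - (\<Sum>w\<in>V. arc w u)"
    unfolding score_def skew_def outdeg_def by (simp add: sum_subtractf)
  also have "(\<Sum>w\<in>V. arc w u) = (\<Sum>w\<in>V. offdiag u w - arc u w)"
    by (rule sum.cong[OF refl]) (use arc_add_converse[OF u] in \<open>simp add: algebra_simps\<close>)
  also have "\<dots> = (N - 1) - outdeg u"
    unfolding outdeg_def sum_subtractf using sum_offdiag_row[OF u] by simp
  finally show ?thesis by simp
qed

lemma defect_eq_common_out:
  assumes u: "u \<in> V" and v: "v \<in> V" and "u \<noteq> v"
  shows "defect u v = score u + score v + N - 3 - 4 * common_out u v"
proof -
  have "skew_sq u v = - (\<Sum>w\<in>V. skew u w * skew v w)"
    unfolding skew_sq_def by (subst sum_negf[symmetric], rule sum.cong) (auto simp: skew_antisym[of _ v])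
  also have "(\<Sum>w\<in>V. skew u w * skew v w) = (\<Sum>w\<in>V. 4 * (arc u w * arc v w)
      - 2 * (offdiag v w * arc u w) - 2 * (offdiag u w * arc v w) + offdiag u w * offdiag v w)"
  proof (rule sum.cong[OF refl])
    fix w assume w: "w \<in> V"
    show "skew u w * skew v w = 4 * (arc u w * arc v w)
        - 2 * (offdiag v w * arc u w) - 2 * (offdiag u w * arc v w) + offdiag u w * offdiag v w"
    proof -
      have "skew u w = 2 * arc u w - offdiag u w" and "skew v w = 2 * arc v w - offdiag v w"
        using two_arc_eq[OF u w] two_arc_eq[OF v w] by linarith+
      then show ?thesis
        by (simp only:) (simp add: algebra_simps)
    qed
  qed
  also have "\<dots> = 4 * common_out u v - 2 * (\<Sum>w\<in>V. offdiag v w * arc u w)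
      - 2 * (\<Sum>w\<in>V. offdiag u w * arc v w) + (\<Sum>w\<in>V. offdiag u w * offdiag v w)"
    unfolding common_out_def by (simp only: sum.distrib sum_subtractf sum_distrib_left[symmetric])
  also have "\<dots> = 4 * common_out u v - 2 * (outdeg u - arc u v) - 2 * (outdeg v - arc v u) + (N - 2)"
    using sum_offdiag_mult[OF finite_V v, of "arc u"] sum_offdiag_mult[OF finite_V u, of "arc v"]
      sum_offdiag_mult[OF finite_V u, of "offdiag v"] sum_offdiag_row[OF v] \<open>u \<noteq> v\<close>
    unfolding outdeg_def by (simp add: offdiag_def)
  finally have "skew_sq u v = - (4 * common_out u v - 2 * (outdeg u - arc u v) - 2 * (outdeg v - arc v u) + (N - 2))" .
  moreover have "arc u v + arc v u = 1"
    using arc_add_converse[OF u v] \<open>u \<noteq> v\<close> by (simp add: offdiag_def)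
  ultimately show ?thesis
    unfolding defect_def score_eq_outdeg[OF u] score_eq_outdeg[OF v] kronecker_def
    using \<open>u \<noteq> v\<close> by (simp add: algebra_simps)
qed

lemma regular_on_V_iff: "regular_on V E \<longleftrightarrow> (\<forall>u\<in>V. score u = 0)"
proof -
  have "2 * card (out_nbrs V E u) + 1 = card V \<longleftrightarrow> score u = 0" if "u \<in> V" for u
  proof -
    have "2 * card (out_nbrs V E u) + 1 = card V \<longleftrightarrow> 2 * outdeg u + 1 = N"
      unfolding outdeg_eq_card N_def by linarith
    then show ?thesis
      using score_eq_outdeg[OF that] by linarith
  qed
  then show ?thesis
    unfolding regular_on_def by blast
qed

lemma regular_on_out_nbrs_iff:
  assumes regular: "\<forall>u\<in>V. score u = 0" and v: "v \<in> V"
  shows "regular_on (out_nbrs V E v) E \<longleftrightarrow> (\<forall>u\<in>V. E v u \<longrightarrow> defect u v = 0)"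
proof -
  have "2 * card (out_nbrs (out_nbrs V E v) E u) + 1 = card (out_nbrs V E v) \<longleftrightarrow> defect u v = 0"
    if u: "u \<in> V" and "E v u" for u
  proof -
    have "u \<noteq> v"
      using \<open>E v u\<close> E_in_V by blast
    have "2 * card (out_nbrs (out_nbrs V E v) E u) + 1 = card (out_nbrs V E v)
        \<longleftrightarrow> 2 * common_out u v + 1 = outdeg v"
      unfolding common_out_eq_card outdeg_eq_card by linarith
    then show ?thesis
      using defect_eq_common_out[OF u v \<open>u \<noteq> v\<close>] score_eq_outdeg[OF v] regular u v by auto
  qed
  then show ?thesis
    unfolding regular_on_def out_nbrs_def by auto
qed

lemma doubly_regular_iff:
  "doubly_regular V E \<longleftrightarrow> (\<forall>u\<in>V. score u = 0) \<and> (\<forall>u\<in>V. \<forall>v\<in>V. defect u v = 0)"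
proof (cases "\<forall>u\<in>V. score u = 0")
  case True
  have "(\<forall>v\<in>V. \<forall>u\<in>V. E v u \<longrightarrow> defect u v = 0) \<longleftrightarrow> (\<forall>u\<in>V. \<forall>v\<in>V. defect u v = 0)"
    using E_total defect_sym defect_diag by metis
  then show ?thesis
    unfolding doubly_regular_def regular_on_V_iff using regular_on_out_nbrs_iff[OF True] by auto
next
  case False
  then show ?thesis
    unfolding doubly_regular_def regular_on_V_iff by blast
qed

end

section \<open>Counting directed 5-cycles\<close>

lemma cyc_arcs_5: "cyc_arcs [a, b, c, d, e] = {(a, b), (b, c), (c, d), (d, e), (e, a)}"
  by (simp add: cyc_arcs_def)

lemma length_5_cases: "length xs = 5 \<Longrightarrow> \<exists>a b c d e. xs = [a, b, c, d, e]"
  by (simp add: numeral_eq_Suc length_Suc_conv) blast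

lemma cyc_arcs_5_eq_imp_rotation:
  assumes "distinct [a, b, c, d, e]"
    and "cyc_arcs [p, q, r, s, t] = cyc_arcs [a, b, c, d, e]"
  shows "[p, q, r, s, t] \<in> {[a, b, c, d, e], [b, c, d, e, a], [c, d, e, a, b], [d, e, a, b, c], [e, a, b, c, d]}"
proof -
  have arcs: "{(p, q), (q, r), (r, s), (s, t), (t, p)} = {(a, b), (b, c), (c, d), (d, e), (e, a)}"
    using assms(2) by (simp add: cyc_arcs_5)
  then have "(p, q) \<in> {(a, b), (b, c), (c, d), (d, e), (e, a)}" "(q, r) \<in> {(a, b), (b, c), (c, d), (d, e), (e, a)}"
    "(r, s) \<in> {(a, b), (b, c), (c, d), (d, e), (e, a)}" "(s, t) \<in> {(a, b), (b, c), (c, d), (d, e), (e, a)}"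
    by blast+
  then show ?thesis
    using assms(1) by auto
qed

context finite_tournament
begin

definition cycle_lists :: "'a list set" where
  "cycle_lists = {xs. length xs = 5 \<and> distinct xs \<and> set xs \<subseteq> V \<and> (\<forall>(a, b) \<in> cyc_arcs xs. E a b)}"

definition walk_tuples :: "('a \<times> 'a \<times> 'a \<times> 'a \<times> 'a) set" where
  "walk_tuples = {t \<in> V \<times> V \<times> V \<times> V \<times> V.
     case t of (u, v, w, x, z) \<Rightarrow> E u v \<and> E v x \<and> E x w \<and> E w z \<and> E z u}"

lemma closed_walks5_eq_card: "closed_walks5 = int (card walk_tuples)"
proof -
  have "closed_walks5 = (\<Sum>u\<in>V. \<Sum>v\<in>V. \<Sum>w\<in>V. \<Sum>x\<in>V. \<Sum>z\<in>V.
      (if E u v \<and> E v x \<and> E x w \<and> E w z \<and> E z u then 1 else 0))"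
    unfolding closed_walks5_def walks2_def
  proof (intro sum.cong refl)
    fix u v w
    have "arc u v * (\<Sum>x\<in>V. arc v x * arc x w) * (\<Sum>z\<in>V. arc w z * arc z u)
        = (\<Sum>x\<in>V. \<Sum>z\<in>V. arc u v * (arc v x * arc x w) * (arc w z * arc z u))"
      by (simp only: sum_distrib_left[symmetric] sum_distrib_right[symmetric])
    also have "\<dots> = (\<Sum>x\<in>V. \<Sum>z\<in>V. (if E u v \<and> E v x \<and> E x w \<and> E w z \<and> E z u then 1 else 0))"
      by (intro sum.cong refl) (simp add: arc_def)
    finally show "arc u v * (\<Sum>x\<in>V. arc v x * arc x w) * (\<Sum>z\<in>V. arc w z * arc z u)
        = (\<Sum>x\<in>V. \<Sum>z\<in>V. (if E u v \<and> E v x \<and> E x w \<and> E w z \<and> E z u then 1 else 0))" .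
  qed
  also have "\<dots> = (\<Sum>t\<in>V \<times> V \<times> V \<times> V \<times> V.
      (if (case t of (u, v, w, x, z) \<Rightarrow> E u v \<and> E v x \<and> E x w \<and> E w z \<and> E z u) then 1 else 0))"
    by (simp only: sum.cartesian_product' prod.case)
  also have "\<dots> = int (card walk_tuples)"
    unfolding walk_tuples_def by (rule sum_indicator_eq_card) (simp add: finite_V)
  finally show ?thesis .
qed

text \<open>A closed walk of length 5 in a tournament is a cycle: a repeated vertex would split it into
  two shorter closed walks, but closed walks of length 1 and 2 do not exist.\<close>

lemma bij_betw_walk_tuples_cycle_lists:
  "bij_betw (\<lambda>(u, v, w, x, z). [u, v, x, w, z]) walk_tuples cycle_lists"
  unfolding bij_betw_def
proof
  show "inj_on (\<lambda>(u, v, w, x, z). [u, v, x, w, z]) walk_tuples"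
    by (auto simp: inj_on_def)
  show "(\<lambda>(u, v, w, x, z). [u, v, x, w, z]) ` walk_tuples = cycle_lists"
  proof
    show "(\<lambda>(u, v, w, x, z). [u, v, x, w, z]) ` walk_tuples \<subseteq> cycle_lists"
    proof
      fix xs assume "xs \<in> (\<lambda>(u, v, w, x, z). [u, v, x, w, z]) ` walk_tuples"
      then obtain u v w x z where xs: "xs = [u, v, x, w, z]"
        and in_V: "u \<in> V" "v \<in> V" "w \<in> V" "x \<in> V" "z \<in> V"
        and arcs: "E u v" "E v x" "E x w" "E w z" "E z u"
        unfolding walk_tuples_def by auto
      have "distinct xs"
        unfolding xs using arcs E_in_V E_asym by auto
      then show "xs \<in> cycle_lists"
        unfolding cycle_lists_def xs using in_V arcs by (simp add: cyc_arcs_5)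
    qed
    show "cycle_lists \<subseteq> (\<lambda>(u, v, w, x, z). [u, v, x, w, z]) ` walk_tuples"
    proof
      fix xs assume xs: "xs \<in> cycle_lists"
      then obtain a b c d e where xs_eq: "xs = [a, b, c, d, e]"
        unfolding cycle_lists_def using length_5_cases by blast
      have "(a, b, d, c, e) \<in> walk_tuples"
        using xs unfolding xs_eq cycle_lists_def walk_tuples_def by (simp add: cyc_arcs_5)
      then show "xs \<in> (\<lambda>(u, v, w, x, z). [u, v, x, w, z]) ` walk_tuples"
        unfolding xs_eq by force
    qed
  qed
qed

lemma cycle_lists_same_arcs:
  assumes abcde: "[a, b, c, d, e] \<in> cycle_lists"
  shows "{ys \<in> cycle_lists. cyc_arcs ys = cyc_arcs [a, b, c, d, e]}
    = {[a, b, c, d, e], [b, c, d, e, a], [c, d, e, a, b], [d, e, a, b, c], [e, a, b, c, d]}"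
proof
  have dist: "distinct [a, b, c, d, e]"
    using abcde unfolding cycle_lists_def by blast
  show "{ys \<in> cycle_lists. cyc_arcs ys = cyc_arcs [a, b, c, d, e]}
      \<subseteq> {[a, b, c, d, e], [b, c, d, e, a], [c, d, e, a, b], [d, e, a, b, c], [e, a, b, c, d]}"
  proof
    fix ys assume ys: "ys \<in> {ys \<in> cycle_lists. cyc_arcs ys = cyc_arcs [a, b, c, d, e]}"
    then obtain p q r s t where "ys = [p, q, r, s, t]"
      unfolding cycle_lists_def using length_5_cases by blast
    then show "ys \<in> {[a, b, c, d, e], [b, c, d, e, a], [c, d, e, a, b], [d, e, a, b, c], [e, a, b, c, d]}"
      using cyc_arcs_5_eq_imp_rotation[OF dist] ys by simp
  qed
  show "{[a, b, c, d, e], [b, c, d, e, a], [c, d, e, a, b], [d, e, a, b, c], [e, a, b, c, d]}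
      \<subseteq> {ys \<in> cycle_lists. cyc_arcs ys = cyc_arcs [a, b, c, d, e]}"
    using abcde unfolding cycle_lists_def by (auto simp: cyc_arcs_5)
qed

lemma card_cycle_lists: "card cycle_lists = 5 * c5 V E"
proof -
  have "finite walk_tuples"
    unfolding walk_tuples_def using finite_V by simp
  then have fin: "finite cycle_lists"
    using bij_betw_walk_tuples_cycle_lists bij_betw_finite by blast
  define F where "F C = {ys \<in> cycle_lists. cyc_arcs ys = C}" for C
  have "card cycle_lists = card (\<Union> (F ` (cyc_arcs ` cycle_lists)))"
    unfolding F_def by (rule arg_cong[of _ _ card]) auto
  also have "\<dots> = (\<Sum>C\<in>cyc_arcs ` cycle_lists. card (F C))"
    by (rule card_UN_disjoint) (use fin in \<open>auto simp: F_def\<close>)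
  also have "\<dots> = (\<Sum>C\<in>cyc_arcs ` cycle_lists. 5)"
  proof (rule sum.cong[OF refl])
    fix C assume "C \<in> cyc_arcs ` cycle_lists"
    then obtain a b c d e where abcde: "[a, b, c, d, e] \<in> cycle_lists" and C: "C = cyc_arcs [a, b, c, d, e]"
      unfolding cycle_lists_def using length_5_cases by blast
    then have "distinct [a, b, c, d, e]"
      unfolding cycle_lists_def by blast
    then show "card (F C) = 5"
      unfolding F_def C cycle_lists_same_arcs[OF abcde] by simp
  qed
  also have "cyc_arcs ` cycle_lists = cycles5 V E"
    unfolding cycles5_def cycle_lists_def by blast
  finally show ?thesis
    unfolding c5_def by simp
qed

lemma closed_walks5_eq_c5: "closed_walks5 = 5 * int (c5 V E)"
  unfolding closed_walks5_eq_card
  using bij_betw_same_card[OF bij_betw_walk_tuples_cycle_lists] card_cycle_lists by simp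

end

theorem theorem1:
  fixes V :: "'a set" and E :: "'a \<Rightarrow> 'a \<Rightarrow> bool"
  assumes "tournament V E" and "odd (card V)" and "card V \<ge> 5"
  shows "real (c5 V E) \<le> (real (card V) + 1) * real (card V) * (real (card V) - 1)
                            * (real (card V) - 2) * (real (card V) - 3) / 160
     \<and> (real (c5 V E) = (real (card V) + 1) * real (card V) * (real (card V) - 1)
                            * (real (card V) - 2) * (real (card V) - 3) / 160
         \<longleftrightarrow> doubly_regular V E)"
proof -
  interpret finite_tournament V E
    by (rule finite_tournament.intro) (rule assms(1))
  have odd: "odd N" and ge5: "5 \<le> N"
    unfolding N_def using assms(2,3) by simp_all
  define P where "P = (real (card V) + 1) * real (card V) * (real (card V) - 1)
    * (real (card V) - 2) * (real (card V) - 3)"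
  have "160 * int (c5 V E) = (N + 1) * N * (N - 1) * (N - 2) * (N - 3) - 5 * discrepancy"
    using closed_walks5_eq_discrepancy closed_walks5_eq_c5 by simp
  then have "real_of_int (160 * int (c5 V E))
      = real_of_int ((N + 1) * N * (N - 1) * (N - 2) * (N - 3) - 5 * discrepancy)"
    by (rule arg_cong)
  then have identity: "160 * real (c5 V E) = P - 5 * real_of_int discrepancy"
    unfolding P_def N_def by simp
  have "real (c5 V E) \<le> P / 160"
    using identity discrepancy_nonneg[OF odd ge5] by simp
  moreover have "real (c5 V E) = P / 160 \<longleftrightarrow> doubly_regular V E"
    using identity discrepancy_eq_0_iff[OF odd ge5] doubly_regular_iff by auto
  ultimately show ?thesis
    unfolding P_def by simp
qed

end
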